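(* Let $a,b\in(0,1]$ and $F(x)=F(a,b;a+b;x)$ for $|x|<1$. Then $1/F(x)$ is concave on $(0,1)$. In particular, $$F\Big(\frac{x+y}{2}\Big)\le\frac{2F(x)F(y)}{F(x)+F(y)}$$ for all $x,y\in(0,1)$, with equality if and only if $x=y$.
   Context: $F(a,b;c;x)=\sum_{n=0}^\infty\frac{(a,n)(b,n)}{(c,n)\,n!}x^n$ for $|x|<1$ is the Gaussian hypergeometric function, where $(a,0)=1$ and $(a,n)=a(a+1)\cdots(a+n-1)$ for $n\ge1$. *)

theory Defs
  imports "HOL-Analysis.Analysis"
begin

definition hyp2f1 :: "real \<Rightarrow> real \<Rightarrow> real \<Rightarrow> real \<Rightarrow> real" where
  "hyp2f1 a b c x = (\<Sum>n. pochhammer a n * pochhammer b n / (pochhammer c n * fact n) * x ^ n)"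

end

theory Submission
  imports Defs
begin

text \<open>Euler's integral writes \<open>B(b,a) F(a,b;a+b;z)\<close> as \<open>\<integral>\<^sub>0\<^sup>1 w(t) (1 - zt)\<^sup>-\<^sup>a dt\<close> with the
  Beta weight \<open>w(t) = t\<^sup>b\<^sup>-\<^sup>1 (1 - t)\<^sup>a\<^sup>-\<^sup>1\<close>. For \<open>z = mx + ny\<close> we have \<open>1 - zt = m(1 - xt) + n(1 - yt)\<close>,
  so concavity of \<open>s \<mapsto> s\<^sup>a\<close> (here \<open>a \<le> 1\<close> is used) bounds the kernel \<open>(1 - zt)\<^sup>-\<^sup>a\<close> pointwise by
  the weighted harmonic mean \<open>H(p, q) = (m/p + n/q)\<^sup>-\<^sup>1\<close> of the kernels at \<open>x\<close> and \<open>y\<close>. Since \<open>H\<close> is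
  concave and homogeneous of degree one, Jensen's inequality (via its tangent plane) moves \<open>H\<close> outside
  the integral, which gives \<open>F(mx + ny) \<le> H(F(x), F(y))\<close>, i.e. concavity of \<open>1/F\<close>. The Jensen defect
  vanishes only if the two kernels are proportional, which is impossible for \<open>x \<noteq> y\<close>; this gives
  the equality case.\<close>

definition beta_weight :: "real \<Rightarrow> real \<Rightarrow> real \<Rightarrow> real" where
  "beta_weight p q t = t powr (p - 1) * (1 - t) powr (q - 1)"

definition euler_integral :: "real \<Rightarrow> real \<Rightarrow> real \<Rightarrow> real \<Rightarrow> real" where
  "euler_integral a b c z = integral {0..1} (\<lambda>t. beta_weight b (c - b) t * (1 - z * t) powr (- a))"

lemma beta_weight_nonneg: "0 \<le> beta_weight p q t"
  unfolding beta_weight_def by simp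

lemma has_integral_beta_weight:
  "0 < p \<Longrightarrow> 0 < q \<Longrightarrow> (beta_weight p q has_integral Beta p q) {0..1}"
  unfolding beta_weight_def[abs_def] by (rule has_integral_Beta_real)

lemma Beta_real_pos: "0 < a \<Longrightarrow> 0 < b \<Longrightarrow> 0 < Beta a (b::real)"
  unfolding Beta_def by auto

lemma Beta_add_nat:
  fixes b d :: real
  assumes "0 < b" "0 < d"
  shows "Beta (b + real n) d = Beta b d * pochhammer b n / pochhammer (b + d) n"
proof -
  have "b \<notin> \<int>\<^sub>\<le>\<^sub>0" "b + d \<notin> \<int>\<^sub>\<le>\<^sub>0"
    using assms by (auto elim!: nonpos_Ints_cases)
  then have "pochhammer b n = Gamma (b + real n) / Gamma b"
    and "pochhammer (b + d) n = Gamma (b + d + real n) / Gamma (b + d)"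
    by (simp_all add: pochhammer_Gamma)
  moreover have "Gamma b > 0" "Gamma (b + d) > 0" "Gamma (b + real n) > 0"
    using assms by auto
  ultimately show ?thesis
    unfolding Beta_def by (simp add: field_simps)
qed

lemma has_integral_beta_weight_times_power:
  fixes p q :: real
  assumes "0 < p" "0 < q"
  shows "((\<lambda>t. beta_weight p q t * t ^ n) has_integral Beta (p + real n) q) {0..1}"
proof (rule has_integral_eq[rotated])
  show "(beta_weight (p + real n) q has_integral Beta (p + real n) q) {0..1}"
    using assms by (intro has_integral_beta_weight) auto
  have "t powr (p + real n - 1) = t powr (p - 1) * t ^ n" if "0 \<le> t" for t :: real
  proof (cases "t = 0")
    case False
    have "t powr (p + real n - 1) = t powr (p - 1) * t powr real n"
      by (simp add: powr_add[symmetric] algebra_simps)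
    then show ?thesis
      using that False by (simp add: powr_realpow)
  qed (use assms in simp)
  then show "beta_weight (p + real n) q t = beta_weight p q t * t ^ n" if "t \<in> {0..1}" for t
    using that unfolding beta_weight_def by simp
qed

lemma pochhammer_binomial_series:
  fixes a x :: real
  assumes "\<bar>x\<bar> < 1"
  shows "(\<lambda>n. pochhammer a n / fact n * x ^ n) sums (1 - x) powr (- a)"
proof -
  have "((- a) gchoose n) * (- x) ^ n = pochhammer a n / fact n * x ^ n" for n
    by (simp add: gbinomial_pochhammer power_mult_distrib[symmetric] flip: power_minus)
  then show ?thesis
    using gen_binomial_real[of "- x" "- a"] assms by simp
qed

lemma nonneg_series_integrable_sums_integral:
  fixes f :: "nat \<Rightarrow> 'a::euclidean_space \<Rightarrow> real"
  assumes nonneg: "\<And>n x. x \<in> S \<Longrightarrow> 0 \<le> f n x"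
    and f: "\<And>n. (f n has_integral I n) S"
    and g: "\<And>x. x \<in> S \<Longrightarrow> (\<lambda>n. f n x) sums g x"
    and h: "h integrable_on S" "\<And>x. x \<in> S \<Longrightarrow> g x \<le> h x"
  shows "g integrable_on S" and "I sums integral S g"
proof -
  define F where "F k x = (\<Sum>n<k. f n x)" for k x
  have F: "(F k has_integral (\<Sum>n<k. I n)) S" for k
    unfolding F_def by (intro has_integral_sum) (auto intro: f)
  have F_le_h: "F k x \<le> h x" if "x \<in> S" for k x
  proof -
    have "F k x \<le> g x"
      unfolding F_def using g[OF that] nonneg[OF that]
      by (metis sum_le_suminf sums_iff finite_lessThan)
    then show ?thesis
      using h(2)[OF that] by linarith
  qed
  have "bounded (range (\<lambda>k. integral S (F k)))"
    unfolding bounded_real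
  proof (intro exI ballI)
    fix r assume "r \<in> range (\<lambda>k. integral S (F k))"
    then obtain k where r: "r = integral S (F k)"
      by auto
    have "0 \<le> integral S (F k)"
      using F[of k] nonneg by (intro integral_nonneg) (auto simp: F_def intro!: sum_nonneg)
    moreover have "integral S (F k) \<le> integral S h"
      using F[of k] h F_le_h by (intro integral_le) auto
    ultimately show "\<bar>r\<bar> \<le> integral S h"
      using r by simp
  qed
  moreover have "F k x \<le> F (Suc k) x" if "x \<in> S" for k x
    unfolding F_def using nonneg[OF that] by simp
  moreover have "(\<lambda>k. F k x) \<longlonglongrightarrow> g x" if "x \<in> S" for x
    using g[OF that] unfolding F_def sums_def .
  ultimately have "g integrable_on S \<and> (\<lambda>k. integral S (F k)) \<longlonglongrightarrow> integral S g"
    using has_integral_integrable[OF F] by (intro monotone_convergence_increasing) auto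
  moreover have "integral S (F k) = (\<Sum>n<k. I n)" for k
    using F by (rule integral_unique)
  ultimately show "g integrable_on S" "I sums integral S g"
    unfolding sums_def by simp_all
qed

lemma hyp2f1_euler_integral:
  fixes a b c z :: real
  assumes a: "0 < a" and bc: "0 < b" "b < c" and z: "0 \<le> z" "z < 1"
  shows "(\<lambda>t. beta_weight b (c - b) t * (1 - z * t) powr (- a)) integrable_on {0..1}"
    and "hyp2f1 a b c z = euler_integral a b c z / Beta b (c - b)"
proof -
  define w where "w = beta_weight b (c - b)"
  define f where "f n t = w t * (pochhammer a n / fact n * (z * t) ^ n)" for n t
  define B where "B = Beta b (c - b)"
  have B: "0 < B"
    unfolding B_def using bc by (simp add: Beta_real_pos)
  have "(f n has_integral (pochhammer a n / fact n * z ^ n) * Beta (b + real n) (c - b)) {0..1}" for n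
    using has_integral_mult_right[OF has_integral_beta_weight_times_power[of b "c - b" n],
                                  of "pochhammer a n / fact n * z ^ n"] bc
    unfolding f_def w_def by (simp add: power_mult_distrib mult_ac)
  moreover have "(pochhammer a n / fact n * z ^ n) * Beta (b + real n) (c - b)
      = B * (pochhammer a n * pochhammer b n / (pochhammer c n * fact n) * z ^ n)" for n
    using Beta_add_nat[of b "c - b" n] bc by (simp add: B_def mult_ac)
  ultimately have f_integral:
      "(f n has_integral B * (pochhammer a n * pochhammer b n / (pochhammer c n * fact n) * z ^ n)) {0..1}"
    for n
    by simp
  have zt: "0 \<le> z * t" "z * t \<le> z" if "t \<in> {0..1}" for t
    using that z by (auto intro: mult_left_le)
  have f_nonneg: "0 \<le> f n t" if "t \<in> {0..1}" for n t
    unfolding f_def w_def using zt[OF that] a beta_weight_nonneg by (simp add: pochhammer_nonneg)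
  have f_sums: "(\<lambda>n. f n t) sums (w t * (1 - z * t) powr (- a))" if "t \<in> {0..1}" for t
    unfolding f_def using zt[OF that] z by (intro sums_mult pochhammer_binomial_series) auto
  have majorant: "(\<lambda>t. w t * (1 - z) powr (- a)) integrable_on {0..1}"
    unfolding w_def using has_integral_beta_weight[of b "c - b"] bc
    by (intro integrable_on_mult_left) (auto simp: has_integral_integrable)
  have le_majorant: "w t * (1 - z * t) powr (- a) \<le> w t * (1 - z) powr (- a)" if "t \<in> {0..1}" for t
    unfolding w_def using zt[OF that] z a beta_weight_nonneg by (intro mult_left_mono powr_mono2') auto
  note series_integral =
    nonneg_series_integrable_sums_integral[OF f_nonneg f_integral f_sums majorant le_majorant]
  then show "(\<lambda>t. beta_weight b (c - b) t * (1 - z * t) powr (- a)) integrable_on {0..1}"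
    unfolding w_def by simp
  have "(\<lambda>n. pochhammer a n * pochhammer b n / (pochhammer c n * fact n) * z ^ n)
          sums (euler_integral a b c z / B)"
    using sums_divide[OF series_integral(2), of B] B unfolding euler_integral_def w_def by simp
  then show "hyp2f1 a b c z = euler_integral a b c z / Beta b (c - b)"
    unfolding hyp2f1_def B_def by (simp add: sums_iff)
qed

lemma Beta_le_euler_integral:
  fixes a b c z :: real
  assumes a: "0 < a" and bc: "0 < b" "b < c" and z: "0 \<le> z" "z < 1"
  shows "Beta b (c - b) \<le> euler_integral a b c z"
  unfolding euler_integral_def
proof (rule has_integral_le[OF has_integral_beta_weight integrable_integral])
  show "(\<lambda>t. beta_weight b (c - b) t * (1 - z * t) powr (- a)) integrable_on {0..1}"
    using hyp2f1_euler_integral(1)[OF a bc z] .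
  fix t :: real
  assume t: "t \<in> {0..1}"
  then have "0 < 1 - z * t" "1 - z * t \<le> 1"
    using z mult_left_le[of t z] by auto
  then have "1 \<le> (1 - z * t) powr (- a)"
    using a powr_mono2'[of "- a" "1 - z * t" 1] by simp
  then show "beta_weight b (c - b) t \<le> beta_weight b (c - b) t * (1 - z * t) powr (- a)"
    using mult_left_mono[OF _ beta_weight_nonneg] by fastforce
qed (use bc in auto)

lemma one_le_hyp2f1:
  fixes a b c z :: real
  assumes "0 < a" "0 < b" "b < c" "0 \<le> z" "z < 1"
  shows "1 \<le> hyp2f1 a b c z"
  using Beta_le_euler_integral[OF assms] hyp2f1_euler_integral(2)[OF assms] Beta_real_pos[of b "c - b"] assms
  by simp

lemma powr_convex_combination_le:
  fixes a u v m n :: real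
  assumes a: "0 < a" "a \<le> 1" and uv: "0 < u" "0 < v" and mn: "0 \<le> m" "0 \<le> n" "m + n = 1"
  shows "m * u powr a + n * v powr a \<le> (m * u + n * v) powr a"
proof -
  have convex: "convex_on {0<..} (\<lambda>s. s powr (1 / a))"
    using a by (intro powr_convex) simp
  have pos: "0 < m * u powr a + n * v powr a"
    using mn uv by (cases "m = 0") (auto intro: add_pos_nonneg)
  have m_eq: "m = 1 - n"
    using mn by simp
  have "(m * u powr a + n * v powr a) powr (1 / a) \<le> m * (u powr a) powr (1 / a) + n * (v powr a) powr (1 / a)"
    unfolding m_eq using convex_onD[OF convex, of n "u powr a" "v powr a"] mn uv by simp
  also have "\<dots> = m * u + n * v"
    using a uv by (simp add: powr_powr)
  finally have "((m * u powr a + n * v powr a) powr (1 / a)) powr a \<le> (m * u + n * v) powr a"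
    using pos a by (intro powr_mono2) auto
  then show ?thesis
    using pos a by (simp add: powr_powr)
qed

lemma powr_neg_convex_combination_le_harmonic_mean:
  fixes a u v m n :: real
  assumes a: "0 < a" "a \<le> 1" and uv: "0 < u" "0 < v" and mn: "0 \<le> m" "0 \<le> n" "m + n = 1"
  shows "(m * u + n * v) powr (- a)
           \<le> u powr (- a) * v powr (- a) / (m * v powr (- a) + n * u powr (- a))"
proof -
  have pos: "0 < m * u powr a + n * v powr a"
    using mn uv by (cases "m = 0") (auto intro: add_pos_nonneg)
  have "(m * u + n * v) powr (- a) = 1 / (m * u + n * v) powr a"
    by (simp add: powr_minus_divide)
  also have "\<dots> \<le> 1 / (m * u powr a + n * v powr a)"
    using powr_convex_combination_le[OF a uv mn] pos by (intro divide_left_mono mult_pos_pos) auto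
  also have "\<dots> = u powr (- a) * v powr (- a) / (m * v powr (- a) + n * u powr (- a))"
    using uv by (simp add: powr_minus field_simps)
  finally show ?thesis .
qed

text \<open>The weighted harmonic mean \<open>pq / (mq + np)\<close> is concave and homogeneous of degree one;
  this identity is its tangent plane at \<open>(P, Q)\<close> plus a nonnegative defect.\<close>
lemma weighted_harmonic_mean_tangent:
  fixes P Q p q m n :: real
  assumes "0 < P" "0 < Q" "0 < p" "0 < q" "0 \<le> m" "0 \<le> n" "m + n = 1"
  shows "p * q / (m * q + n * p) + m * n * (Q * p - P * q)\<^sup>2 / ((m * Q + n * P)\<^sup>2 * (m * q + n * p))
         = m * Q\<^sup>2 / (m * Q + n * P)\<^sup>2 * p + n * P\<^sup>2 / (m * Q + n * P)\<^sup>2 * q"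
proof -
  have "0 < m * q + n * p" "0 < m * Q + n * P"
    using assms by (cases "m = 0"; auto intro: add_pos_nonneg)+
  moreover have "p * q * (m * Q + n * P)\<^sup>2 + m * n * (Q * p - P * q)\<^sup>2
                 = (m * Q\<^sup>2 * p + n * P\<^sup>2 * q) * (m * q + n * p)"
    using assms(7) by (simp add: power2_eq_square algebra_simps)
  ultimately have "p * q / (m * q + n * p) + m * n * (Q * p - P * q)\<^sup>2 / ((m * Q + n * P)\<^sup>2 * (m * q + n * p))
                   = (m * Q\<^sup>2 * p + n * P\<^sup>2 * q) / (m * Q + n * P)\<^sup>2"
    by (simp add: add_divide_distrib[symmetric] divide_simps)
  then show ?thesis
    by (simp add: add_divide_distrib)
qed

lemma integral_pos_of_continuous_minorant:
  fixes G \<phi> :: "real \<Rightarrow> real"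
  assumes G: "G integrable_on {lo..hi}" "\<And>t. t \<in> {lo..hi} \<Longrightarrow> 0 \<le> G t"
    and cd: "c < d" "{c..d} \<subseteq> {lo..hi}"
    and \<phi>: "continuous_on {c..d} \<phi>" "\<And>t. t \<in> {c..d} \<Longrightarrow> 0 \<le> \<phi> t" "\<And>t. t \<in> {c..d} \<Longrightarrow> \<phi> t \<le> G t"
    and t0: "t0 \<in> {c..d}" "0 < \<phi> t0"
  shows "0 < integral {lo..hi} G"
proof -
  have "integral {c..d} \<phi> \<noteq> 0"
    using integral_eq_0_iff[OF \<phi>(1) cd(1) \<phi>(2)] t0 by auto
  moreover have "0 \<le> integral {c..d} \<phi>"
    using \<phi> by (intro integral_nonneg integrable_continuous_interval) auto
  moreover have G_cd: "G integrable_on {c..d}"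
    using integrable_on_subinterval[OF G(1) cd(2)] .
  then have "integral {c..d} \<phi> \<le> integral {c..d} G"
    using \<phi> by (intro integral_le[OF integrable_continuous_interval G_cd]) auto
  moreover have "integral {c..d} G \<le> integral {lo..hi} G"
    using G G_cd cd by (intro integral_subset_le) auto
  ultimately show ?thesis
    by linarith
qed

lemma integral_le_weighted_harmonic_mean:
  fixes w f g k :: "real \<Rightarrow> real" and lo hi m n :: real
  defines "P \<equiv> integral {lo..hi} (\<lambda>t. w t * f t)" and "Q \<equiv> integral {lo..hi} (\<lambda>t. w t * g t)"
  assumes mn: "0 \<le> m" "0 \<le> n" "m + n = 1"
    and w: "\<And>t. t \<in> {lo..hi} \<Longrightarrow> 0 \<le> w t"
    and f: "\<And>t. t \<in> {lo..hi} \<Longrightarrow> 0 < f t" and g: "\<And>t. t \<in> {lo..hi} \<Longrightarrow> 0 < g t"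
    and k: "\<And>t. t \<in> {lo..hi} \<Longrightarrow> k t \<le> f t * g t / (m * g t + n * f t)"
    and int: "(\<lambda>t. w t * f t) integrable_on {lo..hi}" "(\<lambda>t. w t * g t) integrable_on {lo..hi}"
             "(\<lambda>t. w t * k t) integrable_on {lo..hi}"
    and PQ: "0 < P" "0 < Q"
  shows "integral {lo..hi} (\<lambda>t. w t * k t) \<le> P * Q / (m * Q + n * P)"
    and "\<lbrakk>0 < m; 0 < n; c < d; {c..d} \<subseteq> {lo..hi};
          continuous_on {c..d} w; continuous_on {c..d} f; continuous_on {c..d} g;
          t0 \<in> {c..d}; 0 < w t0; Q * f t0 \<noteq> P * g t0\<rbrakk>
         \<Longrightarrow> integral {lo..hi} (\<lambda>t. w t * k t) < P * Q / (m * Q + n * P)"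
proof -
  define D where "D = m * Q + n * P"
  have D: "0 < D"
    unfolding D_def using mn PQ by (cases "m = 0") (auto intro: add_pos_nonneg)
  define H where "H t = m * n * (Q * f t - P * g t)\<^sup>2 / (D\<^sup>2 * (m * g t + n * f t))" for t
  define \<alpha> where "\<alpha> = m * Q\<^sup>2 / D\<^sup>2"
  define \<beta> where "\<beta> = n * P\<^sup>2 / D\<^sup>2"
  define G where "G t = \<alpha> * (w t * f t) + \<beta> * (w t * g t) - w t * k t" for t
  have G_int: "G integrable_on {lo..hi}"
    unfolding G_def[abs_def] using int by (intro integrable_diff integrable_add integrable_on_mult_right)
  have "\<alpha> * P + \<beta> * Q = P * Q / D"
    using weighted_harmonic_mean_tangent[OF PQ PQ mn] unfolding \<alpha>_def \<beta>_def D_def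
    by (simp add: mult.commute)
  then have G_integral: "integral {lo..hi} G = P * Q / D - integral {lo..hi} (\<lambda>t. w t * k t)"
    unfolding G_def[abs_def] P_def Q_def using int
    by (simp add: integral_diff integral_add integrable_add integrable_on_mult_right)
  have H_nonneg: "0 \<le> H t" if "t \<in> {lo..hi}" for t
    unfolding H_def using mn f[OF that] g[OF that] by simp
  have G_ge: "w t * H t \<le> G t" if "t \<in> {lo..hi}" for t
  proof -
    have "k t + H t \<le> \<alpha> * f t + \<beta> * g t"
      using weighted_harmonic_mean_tangent[OF PQ f[OF that] g[OF that] mn] k[OF that]
      unfolding H_def D_def \<alpha>_def \<beta>_def by (simp add: mult.commute[of "f t"])
    from mult_left_mono[OF this w[OF that]] show ?thesis
      unfolding G_def by (simp add: algebra_simps)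
  qed
  have G_nonneg: "0 \<le> G t" if "t \<in> {lo..hi}" for t
    using G_ge[OF that] H_nonneg[OF that] w[OF that] by (meson mult_nonneg_nonneg order_trans)
  show "integral {lo..hi} (\<lambda>t. w t * k t) \<le> P * Q / (m * Q + n * P)"
    using integral_nonneg[OF G_int G_nonneg] G_integral unfolding D_def by simp
  assume m: "0 < m" and n: "0 < n" and cd: "c < d" "{c..d} \<subseteq> {lo..hi}"
    and cont: "continuous_on {c..d} w" "continuous_on {c..d} f" "continuous_on {c..d} g"
    and t0: "t0 \<in> {c..d}" "0 < w t0" "Q * f t0 \<noteq> P * g t0"
  have "0 < m * g t + n * f t" if "t \<in> {c..d}" for t
    using m n f g cd(2) that by (auto intro!: add_pos_pos mult_pos_pos)
  then have "continuous_on {c..d} (\<lambda>t. w t * H t)"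
    unfolding H_def using D cont by (intro continuous_intros) (auto simp: less_imp_neq[symmetric])
  moreover have "0 < w t0 * H t0"
    using t0 cd(2) m n D f g unfolding H_def by (auto intro!: mult_pos_pos divide_pos_pos add_pos_pos)
  ultimately have "0 < integral {lo..hi} G"
    using cd t0 H_nonneg w G_ge
    by (intro integral_pos_of_continuous_minorant[OF G_int G_nonneg cd, of "\<lambda>t. w t * H t" t0]) auto
  then show "integral {lo..hi} (\<lambda>t. w t * k t) < P * Q / (m * Q + n * P)"
    using G_integral unfolding D_def by simp
qed


text \<open>Any two sample points would do, since \<open>t \<mapsto> (1 - xt) / (1 - yt)\<close> is injective for \<open>x \<noteq> y\<close>;
  these lie in \<open>[1/4, 3/4]\<close>, where the Beta weight is continuous and positive.\<close>
lemma powr_neg_not_proportional: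
  fixes a x y P Q :: real
  assumes a: "0 < a" and xy: "x < 1" "y < 1" "x \<noteq> y" and PQ: "0 < P" "0 < Q"
  shows "\<exists>t\<in>{1/3, 2/3}. Q * (1 - x * t) powr (- a) \<noteq> P * (1 - y * t) powr (- a)"
proof (rule ccontr)
  assume "\<not> ?thesis"
  then have eq1: "Q * (1 - x / 3) powr (- a) = P * (1 - y / 3) powr (- a)"
    and eq2: "Q * (1 - 2 * x / 3) powr (- a) = P * (1 - 2 * y / 3) powr (- a)"
    by (auto simp: mult.commute)
  define A where "A = (1 - x / 3) * (1 - 2 * y / 3)"
  define B where "B = (1 - 2 * x / 3) * (1 - y / 3)"
  have pos: "0 < 1 - x / 3" "0 < 1 - 2 * y / 3" "0 < 1 - 2 * x / 3" "0 < 1 - y / 3"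
    using xy by auto
  then have AB: "0 < A" "0 < B"
    unfolding A_def B_def by auto
  have "(Q * (1 - x / 3) powr (- a)) * (P * (1 - 2 * y / 3) powr (- a))
        = (P * (1 - y / 3) powr (- a)) * (Q * (1 - 2 * x / 3) powr (- a))"
    using eq1 eq2 by simp
  then have "P * Q * A powr (- a) = P * Q * B powr (- a)"
    unfolding A_def B_def using pos by (simp add: powr_mult mult_ac)
  then have "A powr (- a) = B powr (- a)"
    using PQ by simp
  then have "(A powr (- a)) powr (- 1 / a) = (B powr (- a)) powr (- 1 / a)"
    by simp
  then have "A = B"
    using a AB by (simp add: powr_powr)
  moreover have "A - B = (x - y) / 3"
    unfolding A_def B_def by (simp add: field_simps)
  ultimately show False
    using xy(3) by simp
qed

lemma euler_integral_le_weighted_harmonic_mean: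
  fixes a b x y m n :: real
  defines "J \<equiv> euler_integral a b (a + b)"
  assumes a: "0 < a" "a \<le> 1" and b: "0 < b" and xy: "0 \<le> x" "x < 1" "0 \<le> y" "y < 1"
    and mn: "0 \<le> m" "0 \<le> n" "m + n = 1"
  shows "J (m * x + n * y) \<le> J x * J y / (m * J y + n * J x)"
    and "\<lbrakk>0 < m; 0 < n; x \<noteq> y\<rbrakk> \<Longrightarrow> J (m * x + n * y) < J x * J y / (m * J y + n * J x)"
proof -
  define K where "K s t = (1 - s * t) powr (- a)" for s t :: real
  define z where "z = m * x + n * y"
  have J_eq: "J s = integral {0..1} (\<lambda>t. beta_weight b a t * K s t)" for s
    unfolding J_def euler_integral_def K_def by simp
  have z: "0 \<le> z" "z < 1"
    unfolding z_def using xy mn by (auto intro: convex_bound_lt)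
  have base_pos: "0 < 1 - s * t" if "0 \<le> s" "s < 1" "0 \<le> t" "t \<le> 1" for s t :: real
    using that mult_left_le[of t s] by linarith
  have K_pos: "0 < K s t" if "0 \<le> s" "s < 1" "t \<in> {0..1}" for s t
    unfolding K_def using base_pos[of s t] that by simp
  have integrable: "(\<lambda>t. beta_weight b a t * K s t) integrable_on {0..1}" if "0 \<le> s" "s < 1" for s
    using hyp2f1_euler_integral(1)[of a b "a + b" s] a b that unfolding K_def by simp
  have J_pos: "0 < J s" if "0 \<le> s" "s < 1" for s
    using Beta_le_euler_integral[of a b "a + b" s] Beta_real_pos[of b a] a b that
    unfolding J_def by simp
  have kernel_le: "K z t \<le> K x t * K y t / (m * K y t + n * K x t)" if "t \<in> {0..1}" for t
  proof -
    have "1 - z * t = m * (1 - x * t) + n * (1 - y * t)"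
      unfolding z_def using mn(3) by (simp add: algebra_simps)
    then show ?thesis
      unfolding K_def using powr_neg_convex_combination_le_harmonic_mean[OF a _ _ mn] base_pos xy that
      by simp
  qed
  note hypotheses = mn beta_weight_nonneg K_pos kernel_le integrable J_pos[unfolded J_eq]
  show "J (m * x + n * y) \<le> J x * J y / (m * J y + n * J x)"
    unfolding J_eq z_def[symmetric]
    by (intro integral_le_weighted_harmonic_mean(1)[of _ _ 0 1] hypotheses) (use xy z in auto)
  assume m: "0 < m" and n: "0 < n" and "x \<noteq> y"
  obtain t0 where t0: "t0 \<in> {1/3, 2/3}" "J y * K x t0 \<noteq> J x * K y t0"
    using powr_neg_not_proportional[OF a(1) xy(2,4) \<open>x \<noteq> y\<close> J_pos[OF xy(1,2)] J_pos[OF xy(3,4)]]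
    unfolding K_def by blast
  have w_cont: "continuous_on {1/4..3/4} (beta_weight b a)"
    unfolding beta_weight_def by (intro continuous_intros) auto
  have K_cont: "continuous_on {1/4..3/4} (K s)" if "0 \<le> s" "s < 1" for s
    unfolding K_def using base_pos[OF that] by (intro continuous_intros) (auto simp: less_imp_neq[symmetric])
  have "0 < beta_weight b a t0"
    unfolding beta_weight_def using t0 by auto
  then show "J (m * x + n * y) < J x * J y / (m * J y + n * J x)"
    unfolding J_eq z_def[symmetric] using t0[unfolded J_eq]
    by (intro integral_le_weighted_harmonic_mean(2)[of _ _ 0 1 _ _ _ _ "1/4" "3/4" t0]
          hypotheses m n w_cont K_cont) (use xy z in auto)
qed

lemma hyp2f1_reciprocal_convex_combination:
  fixes a b x y m n :: real
  assumes a: "0 < a" "a \<le> 1" and b: "0 < b" and xy: "0 \<le> x" "x < 1" "0 \<le> y" "y < 1"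
    and mn: "0 \<le> m" "0 \<le> n" "m + n = 1"
  shows "m / hyp2f1 a b (a + b) x + n / hyp2f1 a b (a + b) y \<le> 1 / hyp2f1 a b (a + b) (m * x + n * y)"
    and "\<lbrakk>0 < m; 0 < n; x \<noteq> y\<rbrakk> \<Longrightarrow>
           m / hyp2f1 a b (a + b) x + n / hyp2f1 a b (a + b) y < 1 / hyp2f1 a b (a + b) (m * x + n * y)"
proof -
  let ?F = "hyp2f1 a b (a + b)" and ?J = "euler_integral a b (a + b)"
  define B where "B = Beta b a"
  define z where "z = m * x + n * y"
  have z: "0 \<le> z" "z < 1"
    unfolding z_def using xy mn by (auto intro: convex_bound_lt)
  have B: "0 < B"
    unfolding B_def using a b by (simp add: Beta_real_pos)
  have F_eq: "?F s = ?J s / B" if "0 \<le> s" "s < 1" for s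
    using hyp2f1_euler_integral(2)[of a b "a + b" s] a b that unfolding B_def by simp
  have J_pos: "0 < ?J s" if "0 \<le> s" "s < 1" for s
    using Beta_le_euler_integral[of a b "a + b" s] a b that B unfolding B_def by simp
  have "0 < m * ?J y + n * ?J x"
    using mn J_pos[OF xy(1,2)] J_pos[OF xy(3,4)] by (cases "m = 0") (auto intro: add_pos_nonneg)
  then have reciprocal: "m / ?F x + n / ?F y = B / (?J x * ?J y / (m * ?J y + n * ?J x))"
    unfolding F_eq[OF xy(1,2)] F_eq[OF xy(3,4)] using J_pos[OF xy(1,2)] J_pos[OF xy(3,4)] B
    by (simp add: field_simps)
  have F_z: "1 / ?F z = B / ?J z"
    using F_eq[OF z] J_pos[OF z] B by simp
  have denominators: "0 < ?J x * ?J y / (m * ?J y + n * ?J x) * ?J z"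
    using J_pos xy z \<open>0 < m * ?J y + n * ?J x\<close> by simp
  note harmonic = euler_integral_le_weighted_harmonic_mean[OF a b xy mn, folded z_def]
  show "m / ?F x + n / ?F y \<le> 1 / ?F (m * x + n * y)"
    unfolding z_def[symmetric] reciprocal F_z using harmonic(1) denominators B
    by (intro divide_left_mono) auto
  show "m / ?F x + n / ?F y < 1 / ?F (m * x + n * y)" if "0 < m" "0 < n" "x \<noteq> y"
    unfolding z_def[symmetric] reciprocal F_z using harmonic(2)[OF that] denominators B
    by (intro divide_strict_left_mono) auto
qed

lemma le_harmonic_mean_iff:
  fixes X Y M :: real
  assumes "0 < X" "0 < Y" "0 < M"
  shows "M \<le> 2 * X * Y / (X + Y) \<longleftrightarrow> 1/2 / X + 1/2 / Y \<le> 1 / M"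
    and "M = 2 * X * Y / (X + Y) \<longleftrightarrow> 1/2 / X + 1/2 / Y = 1 / M"
  using assms by (auto simp: field_simps)

lemma hyp2f1_midpoint_le_harmonic_mean:
  fixes a b x y :: real
  assumes ab: "0 < a" "a \<le> 1" "0 < b" and xy: "x \<in> {0<..<1}" "y \<in> {0<..<1}"
  shows "hyp2f1 a b (a + b) ((x + y) / 2)
           \<le> 2 * hyp2f1 a b (a + b) x * hyp2f1 a b (a + b) y / (hyp2f1 a b (a + b) x + hyp2f1 a b (a + b) y)"
    and "hyp2f1 a b (a + b) ((x + y) / 2)
           = 2 * hyp2f1 a b (a + b) x * hyp2f1 a b (a + b) y / (hyp2f1 a b (a + b) x + hyp2f1 a b (a + b) y)
         \<longleftrightarrow> x = y"
proof -
  let ?F = "hyp2f1 a b (a + b)"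
  have mid: "1/2 * x + 1/2 * y = (x + y) / 2"
    by simp
  have "0 < ?F s" if "0 \<le> s" "s < 1" for s
    using one_le_hyp2f1[of a b "a + b" s] ab that by simp
  then have pos: "0 < ?F x" "0 < ?F y" "0 < ?F ((x + y) / 2)"
    using xy by auto
  note midpoint = hyp2f1_reciprocal_convex_combination[OF ab, of x y "1/2" "1/2", unfolded mid]
  have "1/2 / ?F x + 1/2 / ?F y \<le> 1 / ?F ((x + y) / 2)"
    using midpoint(1) xy by simp
  then show "?F ((x + y) / 2) \<le> 2 * ?F x * ?F y / (?F x + ?F y)"
    unfolding le_harmonic_mean_iff[OF pos] .
  have "1/2 / ?F x + 1/2 / ?F y < 1 / ?F ((x + y) / 2)" if "x \<noteq> y"
    using midpoint(2) xy that by simp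
  then show "?F ((x + y) / 2) = 2 * ?F x * ?F y / (?F x + ?F y) \<longleftrightarrow> x = y"
    unfolding le_harmonic_mean_iff[OF pos] by force
qed

theorem theorem3p5:
  fixes a b :: real
  assumes "0 < a" "a \<le> 1" "0 < b" "b \<le> 1"
  shows "concave_on {0<..<1} (\<lambda>x. 1 / hyp2f1 a b (a + b) x) \<and>
    (\<forall>x\<in>{0<..<1}. \<forall>y\<in>{0<..<1}.
           hyp2f1 a b (a + b) ((x + y) / 2)
             \<le> 2 * hyp2f1 a b (a + b) x * hyp2f1 a b (a + b) y
                 / (hyp2f1 a b (a + b) x + hyp2f1 a b (a + b) y)
         \<and> (hyp2f1 a b (a + b) ((x + y) / 2)
             = 2 * hyp2f1 a b (a + b) x * hyp2f1 a b (a + b) y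
                 / (hyp2f1 a b (a + b) x + hyp2f1 a b (a + b) y) \<longleftrightarrow> x = y))"
proof -
  have "concave_on {0<..<1} (\<lambda>x. 1 / hyp2f1 a b (a + b) x)"
    unfolding concave_on_iff using hyp2f1_reciprocal_convex_combination(1)[OF assms(1-3)] by auto
  then show ?thesis
    using hyp2f1_midpoint_le_harmonic_mean[OF assms(1-3)] by blast
qed

end
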